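(* Let $X$ be the Cantor set, $\alpha$ a minimal homeomorphism of $X$, and $\phi:X\to\operatorname{Isom}(\mathbb{T})$ continuous such that $\alpha\times\phi$ is minimal and not orientation preserving. Let $x_0\in X$ and let $\mathcal P=\{X(v,k):v\in V,\ k=1,\dots,h(v)\}$ be a Kakutani–Rohlin partition for $(X,\alpha)$ such that $x_0\in R(\mathcal P)$ and $o(\phi)$ is constant on each clopen set of $\widetilde{\mathcal P}$. Then $h_\phi$ is equivalent to $\sum_{v\in V,\ o(\phi)_v=1}1_{X(v,h(v))}$ in $K_1(A_{x_0})$.
   Context: $\alpha\times\phi:(x,t)\mapsto(\alpha(x),\phi_x(t))$; $o(\phi)(x)=0$ if $\phi_x$ preserves orientation and $1$ otherwise; $\alpha\times\phi$ is orientation preserving iff $o(\phi)\in\{f-f\circ\alpha^{-1}:f\in C(X,\mathbb{Z}_2)\}$. Define the automorphism $\alpha_\phi^*$ of $C(X,\mathbb{Z})$ by $\alpha_\phi^*(f)(x)=(-1)^{o(\phi)(\alpha^{-1}(x))}f(\alpha^{-1}(x))$ (this is the map induced by $\alpha\times\phi$ on $K_1(C(X\times\mathbb{T}))\cong C(X,\mathbb{Z})$). With $A_{x_0}$ the $C^*$-subalgebra of $C^*(X\times\mathbb{T},\alpha\times\phi)$ generated by $C(X\times\mathbb{T})$ and $uC_0((X\setminus\{x_0\})\times\mathbb{T})$, $K_1(A_{x_0})$ is identified with $C(X,\mathbb{Z})/\{f-\alpha_\phi^*(f):f\in C(X,\mathbb{Z}),f(x_0)=0\}$; "$f$ is equivalent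 to $g$ in $K_1(A_{x_0})$" means $f-g$ lies in that subgroup. $h_\phi\in C(X,\mathbb{Z})$ is $h_\phi(x)=1$ if $o(\phi)(\alpha^{-1}(x))=1$ and $0$ otherwise. A Kakutani–Rohlin partition is a clopen partition $\{X(v,k)\}$ with $\alpha(X(v,k))=X(v,k+1)$ for $k<h(v)$ and $\alpha(\bigcup_vX(v,h(v)))=\bigcup_vX(v,1)$; $R(\mathcal P)=\bigcup_vX(v,h(v))$ is the roof set, $\widetilde{\mathcal P}=\{X(v,k):k<h(v)\}\cup\{R(\mathcal P)\}$, and $o(\phi)_v=\sum_{i=0}^{h(v)-1}o(\phi)(\alpha^i(x))\in\mathbb{Z}_2$ for any $x\in X(v,1)$. *)

theory Defs
  imports "HOL-Analysis.Analysis"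
begin

(* The Cantor space {0,1}^N with the product topology; "X is the Cantor set" means
   X is homeomorphic to it. *)
definition cantor_space :: "(nat \<Rightarrow> bool) topology" where
  "cantor_space = product_topology (\<lambda>_. discrete_topology (UNIV :: bool set)) UNIV"

definition minimal_homeo :: "'a topology \<Rightarrow> ('a \<Rightarrow> 'a) \<Rightarrow> bool" where
  "minimal_homeo X T \<longleftrightarrow> homeomorphic_map X X T \<and>
     (\<forall>C. closedin X C \<and> T ` C = C \<longrightarrow> C = {} \<or> C = topspace X)"

definition circle :: "complex topology" where
  "circle = subtopology euclidean (sphere 0 1)"

definition circle_isom :: "(complex \<Rightarrow> complex) \<Rightarrow> bool" where
  "circle_isom g \<longleftrightarrow> g ` sphere 0 1 = sphere 0 1 \<and>
     (\<forall>s\<in>sphere 0 1. \<forall>t\<in>sphere 0 1. dist (g s) (g t) = dist s t)"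

(* Orientation-preserving isometries of the circle are the rotations. *)
definition orient_pres :: "(complex \<Rightarrow> complex) \<Rightarrow> bool" where
  "orient_pres g \<longleftrightarrow> (\<exists>c. cmod c = 1 \<and> (\<forall>t\<in>sphere 0 1. g t = c * t))"

(* phi : X -> Isom(T) continuous (continuity into Isom(T) with compact-open topology,
   i.e. joint continuity of (x,t) |-> phi_x(t)). *)
definition isom_cocycle :: "'a topology \<Rightarrow> ('a \<Rightarrow> complex \<Rightarrow> complex) \<Rightarrow> bool" where
  "isom_cocycle X \<phi> \<longleftrightarrow> (\<forall>x\<in>topspace X. circle_isom (\<phi> x)) \<and>
     continuous_map (prod_topology X circle) circle (\<lambda>(x,t). \<phi> x t)"

definition skew :: "('a \<Rightarrow> 'a) \<Rightarrow> ('a \<Rightarrow> complex \<Rightarrow> complex) \<Rightarrow> 'a \<times> complex \<Rightarrow> 'a \<times> complex" where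
  "skew \<alpha> \<phi> = (\<lambda>(x,t). (\<alpha> x, \<phi> x t))"

(* o(phi) with values in Z_2 = bool (True = 1). *)
definition ophi :: "('a \<Rightarrow> complex \<Rightarrow> complex) \<Rightarrow> 'a \<Rightarrow> bool" where
  "ophi \<phi> x = (\<not> orient_pres (\<phi> x))"

definition ainv :: "'a topology \<Rightarrow> ('a \<Rightarrow> 'a) \<Rightarrow> 'a \<Rightarrow> 'a" where
  "ainv X \<alpha> = inv_into (topspace X) \<alpha>"

(* alpha x phi orientation preserving iff o(phi) = f - f o alpha^{-1} for some f in C(X,Z_2)
   (subtraction in Z_2 is exclusive or). *)
definition skew_orient_pres :: "'a topology \<Rightarrow> ('a \<Rightarrow> 'a) \<Rightarrow> ('a \<Rightarrow> complex \<Rightarrow> complex) \<Rightarrow> bool" where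
  "skew_orient_pres X \<alpha> \<phi> \<longleftrightarrow>
     (\<exists>f. continuous_map X (discrete_topology (UNIV::bool set)) f \<and>
          (\<forall>x\<in>topspace X. ophi \<phi> x = (f x \<noteq> f (ainv X \<alpha> x))))"

definition astar :: "'a topology \<Rightarrow> ('a \<Rightarrow> 'a) \<Rightarrow> ('a \<Rightarrow> complex \<Rightarrow> complex) \<Rightarrow> ('a \<Rightarrow> int) \<Rightarrow> 'a \<Rightarrow> int" where
  "astar X \<alpha> \<phi> f x = (if ophi \<phi> (ainv X \<alpha> x) then - 1 else 1) * f (ainv X \<alpha> x)"

definition hphi :: "'a topology \<Rightarrow> ('a \<Rightarrow> 'a) \<Rightarrow> ('a \<Rightarrow> complex \<Rightarrow> complex) \<Rightarrow> 'a \<Rightarrow> int" where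
  "hphi X \<alpha> \<phi> x = (if ophi \<phi> (ainv X \<alpha> x) then 1 else 0)"

(* f and g are equivalent in K_1(A_{x0}) = C(X,Z)/{f - alpha_phi^* f : f in C(X,Z), f(x0)=0};
   functions are compared on the space X. *)
definition K1_equiv :: "'a topology \<Rightarrow> ('a \<Rightarrow> 'a) \<Rightarrow> ('a \<Rightarrow> complex \<Rightarrow> complex) \<Rightarrow> 'a
      \<Rightarrow> ('a \<Rightarrow> int) \<Rightarrow> ('a \<Rightarrow> int) \<Rightarrow> bool" where
  "K1_equiv X \<alpha> \<phi> x0 f g \<longleftrightarrow>
     (\<exists>k. continuous_map X euclidean k \<and> k x0 = 0 \<and>
          (\<forall>x\<in>topspace X. f x - g x = k x - astar X \<alpha> \<phi> k x))"

definition KR_partition :: "'a topology \<Rightarrow> ('a \<Rightarrow> 'a) \<Rightarrow> 'v set \<Rightarrow> ('v \<Rightarrow> nat)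
      \<Rightarrow> ('v \<Rightarrow> nat \<Rightarrow> 'a set) \<Rightarrow> bool" where
  "KR_partition X \<alpha> V h P \<longleftrightarrow>
     finite V \<and> (\<forall>v\<in>V. 1 \<le> h v) \<and>
     (\<forall>v\<in>V. \<forall>k\<in>{1..h v}. closedin X (P v k) \<and> openin X (P v k) \<and> P v k \<noteq> {}) \<and>
     (\<forall>v\<in>V. \<forall>k\<in>{1..h v}. \<forall>w\<in>V. \<forall>l\<in>{1..h w}. (v,k) \<noteq> (w,l) \<longrightarrow> P v k \<inter> P w l = {}) \<and>
     (\<Union>v\<in>V. \<Union>k\<in>{1..h v}. P v k) = topspace X \<and>
     (\<forall>v\<in>V. \<forall>k. 1 \<le> k \<and> k < h v \<longrightarrow> \<alpha> ` P v k = P v (Suc k)) \<and>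
     \<alpha> ` (\<Union>v\<in>V. P v (h v)) = (\<Union>v\<in>V. P v 1)"

definition roof :: "'v set \<Rightarrow> ('v \<Rightarrow> nat) \<Rightarrow> ('v \<Rightarrow> nat \<Rightarrow> 'a set) \<Rightarrow> 'a set" where
  "roof V h P = (\<Union>v\<in>V. P v (h v))"

definition tilde_partition :: "'v set \<Rightarrow> ('v \<Rightarrow> nat) \<Rightarrow> ('v \<Rightarrow> nat \<Rightarrow> 'a set) \<Rightarrow> 'a set set" where
  "tilde_partition V h P = {P v k | v k. v \<in> V \<and> 1 \<le> k \<and> k < h v} \<union> {roof V h P}"

definition ophi_tower :: "('a \<Rightarrow> 'a) \<Rightarrow> ('a \<Rightarrow> complex \<Rightarrow> complex) \<Rightarrow> ('v \<Rightarrow> nat)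
      \<Rightarrow> ('v \<Rightarrow> nat \<Rightarrow> 'a set) \<Rightarrow> 'v \<Rightarrow> bool" where
  "ophi_tower \<alpha> \<phi> h P v =
     (let x = (SOME x. x \<in> P v 1) in odd (card {i. i < h v \<and> ophi \<phi> ((\<alpha> ^^ i) x)}))"

end

theory Submission
  imports Defs
begin

(* Let a(x) in Z_2 be the sum of o(phi) over the backward orbit segment of x that starts at its
   last visit to the roof R (the roof point included).  Because o(phi) is constant on the levels
   below the roof and on R, a is constant on every level, a(alpha y) = [y \<notin> R] a(y) + o(phi)(y),
   and on the roof of tower v it equals o(phi)_v.  Hence the locally constant function
   k = [x \<notin> R] a(x), which vanishes at x0 \<in> R, satisfies
   h_phi - [x \<in> R] a(x) = k - alpha_phi^* k, by the identity [a + c] - (-1)^c [a] = [c]. *)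

lemma continuous_map_locally_constant:
  assumes "\<And>x. x \<in> topspace X \<Longrightarrow> \<exists>U. openin X U \<and> x \<in> U \<and> (\<forall>y\<in>U. f y = f x)"
    and "f ` topspace X \<subseteq> topspace Y"
  shows "continuous_map X Y f"
  unfolding continuous_map_def
proof (intro conjI allI impI)
  fix W assume "openin Y W"
  show "openin X {x \<in> topspace X. f x \<in> W}"
  proof (subst openin_subopen, intro ballI)
    fix x assume x: "x \<in> {x \<in> topspace X. f x \<in> W}"
    then obtain U where U: "openin X U" "x \<in> U" "\<forall>y\<in>U. f y = f x"
      using assms(1) by blast
    then have "U \<subseteq> {x \<in> topspace X. f x \<in> W}"
      using x openin_subset by fastforce
    with U show "\<exists>T. openin X T \<and> x \<in> T \<and> T \<subseteq> {x \<in> topspace X. f x \<in> W}"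
      by blast
  qed
qed (use assms(2) in blast)

definition orbit_parity :: "('a \<Rightarrow> bool) \<Rightarrow> ('a \<Rightarrow> 'a) \<Rightarrow> 'a \<Rightarrow> nat \<Rightarrow> bool" where
  "orbit_parity p f x n = odd (card {i. i < n \<and> p ((f ^^ i) x)})"

lemma orbit_parity_0 [simp]: "orbit_parity p f x 0 = False"
  by (simp add: orbit_parity_def)

lemma orbit_parity_Suc [simp]:
  "orbit_parity p f x (Suc n) = (orbit_parity p f x n \<noteq> p ((f ^^ n) x))"
proof -
  let ?A = "{i. i < n \<and> p ((f ^^ i) x)}"
  have "{i. i < Suc n \<and> p ((f ^^ i) x)} = (if p ((f ^^ n) x) then insert n ?A else ?A)"
    by (auto simp: less_Suc_eq)
  then show ?thesis
    by (simp add: orbit_parity_def)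
qed

locale kakutani_rohlin =
  fixes X :: "'a topology" and \<alpha> :: "'a \<Rightarrow> 'a" and V :: "'v set" and h :: "'v \<Rightarrow> nat"
    and P :: "'v \<Rightarrow> nat \<Rightarrow> 'a set"
  assumes partition: "KR_partition X \<alpha> V h P"
begin

lemma finite_towers: "finite V"
  using partition by (simp add: KR_partition_def)

lemma height_pos: "v \<in> V \<Longrightarrow> 1 \<le> h v"
  using partition by (simp add: KR_partition_def)

lemma level_openin: "v \<in> V \<Longrightarrow> k \<in> {1..h v} \<Longrightarrow> openin X (P v k)"
  using partition by (simp add: KR_partition_def)

lemma level_nonempty: "v \<in> V \<Longrightarrow> k \<in> {1..h v} \<Longrightarrow> P v k \<noteq> {}"
  using partition by (simp add: KR_partition_def)

lemma topspace_eq_levels: "topspace X = (\<Union>v\<in>V. \<Union>k\<in>{1..h v}. P v k)"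
  using partition by (simp add: KR_partition_def)

lemma level_subset_topspace: "v \<in> V \<Longrightarrow> k \<in> {1..h v} \<Longrightarrow> P v k \<subseteq> topspace X"
  using topspace_eq_levels by blast

lemma level_unique:
  assumes "v \<in> V" "j \<in> {1..h v}" "w \<in> V" "l \<in> {1..h w}" "x \<in> P v j" "x \<in> P w l"
  shows "v = w \<and> j = l"
proof -
  have "\<forall>v\<in>V. \<forall>k\<in>{1..h v}. \<forall>w\<in>V. \<forall>l\<in>{1..h w}. (v, k) \<noteq> (w, l) \<longrightarrow> P v k \<inter> P w l = {}"
    using partition by (simp add: KR_partition_def)
  then have "(v, j) \<noteq> (w, l) \<Longrightarrow> P v j \<inter> P w l = {}"
    using assms(1-4) by blast
  with assms(5,6) show ?thesis
    by blast
qed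

lemma roof_subset_topspace: "roof V h P \<subseteq> topspace X"
  using level_subset_topspace height_pos by (auto simp: roof_def)

lemma base_subset_topspace: "(\<Union>v\<in>V. P v 1) \<subseteq> topspace X"
  using level_subset_topspace height_pos by auto

lemma levelE:
  assumes "x \<in> topspace X"
  obtains v j where "v \<in> V" "j \<in> {1..h v}" "x \<in> P v j"
  using assms topspace_eq_levels by blast

lemma image_level: "v \<in> V \<Longrightarrow> 1 \<le> k \<Longrightarrow> k < h v \<Longrightarrow> \<alpha> ` P v k = P v (Suc k)"
  using partition by (simp add: KR_partition_def)

lemma image_roof: "\<alpha> ` roof V h P = (\<Union>v\<in>V. P v 1)"
  using partition by (simp add: KR_partition_def roof_def)

lemma roof_iff_top_level:
  assumes "v \<in> V" "j \<in> {1..h v}" "x \<in> P v j"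
  shows "x \<in> roof V h P \<longleftrightarrow> j = h v"
proof
  assume "x \<in> roof V h P"
  then obtain w where "w \<in> V" "x \<in> P w (h w)"
    by (auto simp: roof_def)
  with assms level_unique[of v j w "h w" x] height_pos show "j = h v"
    by auto
qed (use assms in \<open>auto simp: roof_def\<close>)

lemma iterate_in_level: "v \<in> V \<Longrightarrow> x \<in> P v 1 \<Longrightarrow> n < h v \<Longrightarrow> (\<alpha> ^^ n) x \<in> P v (Suc n)"
proof (induction n)
  case (Suc n)
  then have "(\<alpha> ^^ Suc n) x \<in> \<alpha> ` P v (Suc n)"
    by simp
  with Suc.prems show ?case
    using image_level[of v "Suc n"] by simp
qed simp

lemma image_topspace_subset: "\<alpha> ` topspace X \<subseteq> topspace X"
proof
  fix x assume "x \<in> \<alpha> ` topspace X"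
  then obtain y v k where y: "x = \<alpha> y" "v \<in> V" "k \<in> {1..h v}" "y \<in> P v k"
    by (auto elim: levelE)
  show "x \<in> topspace X"
  proof (cases "k < h v")
    case True
    then have "x \<in> P v (Suc k)"
      using y image_level[of v k] by auto
    with True y(2) show ?thesis
      using level_subset_topspace[of v "Suc k"] by auto
  next
    case False
    then have "y \<in> roof V h P"
      using y by (auto simp: roof_def)
    then show ?thesis
      using y(1) image_roof base_subset_topspace by blast
  qed
qed

lemma topspace_subset_image: "topspace X \<subseteq> \<alpha> ` topspace X"
proof
  fix x assume "x \<in> topspace X"
  then obtain v k where x: "v \<in> V" "k \<in> {1..h v}" "x \<in> P v k"
    by (rule levelE)
  show "x \<in> \<alpha> ` topspace X"
  proof (cases "k = 1")
    case True
    then have "x \<in> \<alpha> ` roof V h P"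
      using x image_roof by auto
    then show ?thesis
      using roof_subset_topspace by blast
  next
    case False
    then have "1 \<le> k - 1" "k - 1 < h v" "Suc (k - 1) = k"
      using x(2) by auto
    then have "x \<in> \<alpha> ` P v (k - 1)"
      using x image_level[of v "k - 1"] by simp
    then show ?thesis
      using x(1) \<open>1 \<le> k - 1\<close> \<open>k - 1 < h v\<close> level_subset_topspace[of v "k - 1"] by auto
  qed
qed

lemma image_topspace: "\<alpha> ` topspace X = topspace X"
  by (rule equalityI[OF image_topspace_subset topspace_subset_image])

lemma ainv_in_topspace: "x \<in> topspace X \<Longrightarrow> ainv X \<alpha> x \<in> topspace X"
  unfolding ainv_def using image_topspace by (metis inv_into_into)

lemma apply_ainv: "x \<in> topspace X \<Longrightarrow> \<alpha> (ainv X \<alpha> x) = x"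
  unfolding ainv_def using image_topspace by (metis f_inv_into_f)

lemma continuous_map_levelwise_constant:
  assumes "\<And>v j x y. v \<in> V \<Longrightarrow> j \<in> {1..h v} \<Longrightarrow> x \<in> P v j \<Longrightarrow> y \<in> P v j \<Longrightarrow> f x = f y"
    and "f ` topspace X \<subseteq> topspace Y"
  shows "continuous_map X Y f"
proof (rule continuous_map_locally_constant[OF _ assms(2)])
  fix x assume "x \<in> topspace X"
  then obtain v j where "v \<in> V" "j \<in> {1..h v}" "x \<in> P v j"
    by (rule levelE)
  then have "openin X (P v j) \<and> x \<in> P v j \<and> (\<forall>y\<in>P v j. f y = f x)"
    using assms(1) level_openin by blast
  then show "\<exists>U. openin X U \<and> x \<in> U \<and> (\<forall>y\<in>U. f y = f x)"
    by blast
qed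

end

locale kakutani_rohlin_orientation = kakutani_rohlin X \<alpha> V h P
  for X :: "'a topology" and \<alpha> and V :: "'v set" and h and P +
  fixes \<phi> :: "'a \<Rightarrow> complex \<Rightarrow> complex" and x0 :: 'a
  assumes x0_roof: "x0 \<in> roof V h P"
    and ophi_const: "\<forall>S\<in>tilde_partition V h P. \<forall>x\<in>S. \<forall>y\<in>S. ophi \<phi> x = ophi \<phi> y"
begin

definition tower_base :: "'v \<Rightarrow> 'a" where
  "tower_base v = (SOME x. x \<in> P v 1)"

lemma tower_base_in_level: "v \<in> V \<Longrightarrow> tower_base v \<in> P v 1"
  unfolding tower_base_def using level_nonempty[of v 1] height_pos by (simp add: some_in_eq)

lemma ophi_tower_eq_orbit_parity:
  "ophi_tower \<alpha> \<phi> h P v = orbit_parity (ophi \<phi>) \<alpha> (tower_base v) (h v)"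
  by (simp add: ophi_tower_def orbit_parity_def tower_base_def Let_def)

lemma ophi_roof:
  assumes "x \<in> roof V h P"
  shows "ophi \<phi> x = ophi \<phi> x0"
proof -
  have "roof V h P \<in> tilde_partition V h P"
    by (simp add: tilde_partition_def)
  then show ?thesis
    using ophi_const x0_roof assms by blast
qed

lemma ophi_level:
  assumes "v \<in> V" "1 \<le> j" "j < h v" "x \<in> P v j"
  shows "ophi \<phi> x = ophi \<phi> ((\<alpha> ^^ (j - 1)) (tower_base v))"
proof -
  have "P v j \<in> tilde_partition V h P"
    using assms by (auto simp: tilde_partition_def)
  moreover have "Suc (j - 1) = j"
    using assms(2) by simp
  then have "(\<alpha> ^^ (j - 1)) (tower_base v) \<in> P v j"
    using iterate_in_level[OF assms(1) tower_base_in_level[OF assms(1)], of "j - 1"] assms(3) by simp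
  ultimately show ?thesis
    using ophi_const assms(4) by blast
qed

(* The function a of the proof idea; the summand ophi phi x0 is the contribution of the roof point. *)
definition parity_since_roof :: "'a \<Rightarrow> bool" where
  "parity_since_roof x \<longleftrightarrow> (\<exists>v\<in>V. \<exists>j\<in>{1..h v}. x \<in> P v j \<and>
     (ophi \<phi> x0 \<noteq> orbit_parity (ophi \<phi>) \<alpha> (tower_base v) (j - 1)))"

lemma parity_since_roof_level:
  assumes "v \<in> V" "j \<in> {1..h v}" "x \<in> P v j"
  shows "parity_since_roof x \<longleftrightarrow> ophi \<phi> x0 \<noteq> orbit_parity (ophi \<phi>) \<alpha> (tower_base v) (j - 1)"
proof
  assume "parity_since_roof x"
  then obtain w l where "w \<in> V" "l \<in> {1..h w}" "x \<in> P w l"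
    and "ophi \<phi> x0 \<noteq> orbit_parity (ophi \<phi>) \<alpha> (tower_base w) (l - 1)"
    unfolding parity_since_roof_def by blast
  with level_unique[OF assms(1,2) \<open>w \<in> V\<close> \<open>l \<in> {1..h w}\<close> assms(3)]
  show "ophi \<phi> x0 \<noteq> orbit_parity (ophi \<phi>) \<alpha> (tower_base v) (j - 1)"
    by simp
qed (use assms in \<open>unfold parity_since_roof_def, blast\<close>)

lemma parity_since_roof_step:
  assumes y: "y \<in> topspace X"
  shows "parity_since_roof (\<alpha> y) \<longleftrightarrow> (y \<notin> roof V h P \<and> parity_since_roof y) \<noteq> ophi \<phi> y"
proof -
  obtain v j where vj: "v \<in> V" "j \<in> {1..h v}" "y \<in> P v j"
    using y by (rule levelE)
  show ?thesis
  proof (cases "j < h v")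
    case True
    let ?par = "orbit_parity (ophi \<phi>) \<alpha> (tower_base v)"
    have "\<alpha> y \<in> P v (Suc j)"
      using vj image_level[of v j] True by auto
    then have "parity_since_roof (\<alpha> y) \<longleftrightarrow> ophi \<phi> x0 \<noteq> ?par j"
      using parity_since_roof_level[OF vj(1), of "Suc j"] True by simp
    also have "?par j = (?par (j - 1) \<noteq> ophi \<phi> y)"
      using vj(2) orbit_parity_Suc[of "ophi \<phi>" \<alpha> "tower_base v" "j - 1"]
        ophi_level[OF vj(1) _ True vj(3)] by (simp add: Suc_diff_1)
    finally show ?thesis
      using True parity_since_roof_level[OF vj] roof_iff_top_level[OF vj] by auto
  next
    case False
    then have "y \<in> roof V h P"
      using vj roof_iff_top_level by auto
    then obtain w where w: "w \<in> V" "\<alpha> y \<in> P w 1"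
      using image_roof by blast
    then show ?thesis
      using parity_since_roof_level[OF w(1) _ w(2)] height_pos ophi_roof \<open>y \<in> roof V h P\<close>
      by auto
  qed
qed

lemma ophi_tower_eq_parity_since_roof:
  assumes "v \<in> V" "x \<in> P v (h v)"
  shows "ophi_tower \<alpha> \<phi> h P v \<longleftrightarrow> parity_since_roof x"
proof -
  have hv: "h v = Suc (h v - 1)"
    using height_pos[OF assms(1)] by simp
  then have "(\<alpha> ^^ (h v - 1)) (tower_base v) \<in> P v (h v)"
    using iterate_in_level[OF assms(1) tower_base_in_level[OF assms(1)], of "h v - 1"] by simp
  then have top: "(\<alpha> ^^ (h v - 1)) (tower_base v) \<in> roof V h P"
    using assms(1) by (auto simp: roof_def)
  then have "ophi_tower \<alpha> \<phi> h P v \<longleftrightarrow>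
      orbit_parity (ophi \<phi>) \<alpha> (tower_base v) (h v - 1) \<noteq> ophi \<phi> x0"
    using ophi_roof[OF top] ophi_tower_eq_orbit_parity[of v] orbit_parity_Suc hv by metis
  then show ?thesis
    using parity_since_roof_level[OF assms(1) _ assms(2)] height_pos assms(1) by auto
qed

lemma roof_sum_eq:
  assumes "x \<in> topspace X"
  shows "(\<Sum>v\<in>{v\<in>V. ophi_tower \<alpha> \<phi> h P v}. if x \<in> P v (h v) then 1 else 0) =
    (of_bool (x \<in> roof V h P \<and> parity_since_roof x) :: int)"
proof -
  obtain v j where vj: "v \<in> V" "j \<in> {1..h v}" "x \<in> P v j"
    using assms by (rule levelE)
  let ?W = "{v\<in>V. ophi_tower \<alpha> \<phi> h P v}"
  have "(\<Sum>w\<in>?W. if x \<in> P w (h w) then 1 else 0) = (\<Sum>w\<in>?W. if w = v then of_bool (j = h v) else (0::int))"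
  proof (rule sum.cong)
    fix w assume "w \<in> ?W"
    then have "w \<in> V" "h w \<in> {1..h w}"
      using height_pos by auto
    then have "x \<in> P w (h w) \<longleftrightarrow> w = v \<and> j = h v"
      using level_unique[OF _ _ vj(1,2), of w "h w" x] vj(3) by auto
    then show "(if x \<in> P w (h w) then 1 else 0) = (if w = v then of_bool (j = h v) else (0::int))"
      by simp
  qed simp
  also have "\<dots> = of_bool (v \<in> ?W \<and> j = h v)"
    using finite_towers by auto
  also have "v \<in> ?W \<and> j = h v \<longleftrightarrow> x \<in> roof V h P \<and> parity_since_roof x"
    using vj roof_iff_top_level[OF vj] ophi_tower_eq_parity_since_roof[OF vj(1)] by auto
  finally show ?thesis .
qed

definition transfer :: "'a \<Rightarrow> int" where
  "transfer x = of_bool (x \<notin> roof V h P \<and> parity_since_roof x)"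

lemma continuous_map_transfer: "continuous_map X euclidean transfer"
proof (rule continuous_map_levelwise_constant)
  fix v j x y assume "v \<in> V" "j \<in> {1..h v}" "x \<in> P v j" "y \<in> P v j"
  then show "transfer x = transfer y"
    unfolding transfer_def using parity_since_roof_level roof_iff_top_level by simp
qed simp

lemma transfer_x0: "transfer x0 = 0"
  using x0_roof by (simp add: transfer_def)

lemma K1_equiv_hphi_roof_sum:
  "K1_equiv X \<alpha> \<phi> x0 (hphi X \<alpha> \<phi>)
     (\<lambda>x. \<Sum>v\<in>{v\<in>V. ophi_tower \<alpha> \<phi> h P v}. if x \<in> P v (h v) then 1 else 0)"
  unfolding K1_equiv_def
proof (intro exI conjI ballI)
  fix x assume x: "x \<in> topspace X"
  define y where "y = ainv X \<alpha> x"
  have "y \<in> topspace X" "\<alpha> y = x"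
    using x ainv_in_topspace apply_ainv by (simp_all add: y_def)
  note step = parity_since_roof_step[OF \<open>y \<in> topspace X\<close>, unfolded \<open>\<alpha> y = x\<close>]
  show "hphi X \<alpha> \<phi> x - (\<Sum>v\<in>{v\<in>V. ophi_tower \<alpha> \<phi> h P v}. if x \<in> P v (h v) then 1 else 0) =
      transfer x - astar X \<alpha> \<phi> transfer x"
    unfolding roof_sum_eq[OF x] hphi_def astar_def transfer_def y_def[symmetric] step
    by (cases "ophi \<phi> y"; cases "y \<in> roof V h P"; cases "x \<in> roof V h P"; cases "parity_since_roof y") auto
qed (use continuous_map_transfer transfer_x0 in auto)

end

theorem lemma6p2:
  fixes X :: "'a topology" and \<alpha> :: "'a \<Rightarrow> 'a" and \<phi> :: "'a \<Rightarrow> complex \<Rightarrow> complex"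
    and x0 :: 'a and V :: "'v set" and h :: "'v \<Rightarrow> nat" and P :: "'v \<Rightarrow> nat \<Rightarrow> 'a set"
  assumes cantor: "X homeomorphic_space cantor_space"
    and amin: "minimal_homeo X \<alpha>"
    and phi: "isom_cocycle X \<phi>"
    and skewmin: "minimal_homeo (prod_topology X circle) (skew \<alpha> \<phi>)"
    and notop: "\<not> skew_orient_pres X \<alpha> \<phi>"
    and x0: "x0 \<in> topspace X"
    and KR: "KR_partition X \<alpha> V h P"
    and x0R: "x0 \<in> roof V h P"
    and const: "\<forall>S\<in>tilde_partition V h P. \<forall>x\<in>S. \<forall>y\<in>S. ophi \<phi> x = ophi \<phi> y"
  shows "K1_equiv X \<alpha> \<phi> x0 (hphi X \<alpha> \<phi>)
           (\<lambda>x. \<Sum>v\<in>{v\<in>V. ophi_tower \<alpha> \<phi> h P v}. if x \<in> P v (h v) then 1 else 0)"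
proof -
  interpret kakutani_rohlin_orientation X \<alpha> V h P \<phi> x0
    by unfold_locales (fact KR x0R const)+
  show ?thesis
    by (rule K1_equiv_hphi_roof_sum)
qed

end
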